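(* Let $0<p<1$ and $\alpha>-1$, and consider the urn transfer process described in the context (the $p_k$-model), assumed well defined, i.e. $0\le p_{k+1}\le1$ at every stage. Let $\beta=\frac{1-p}{1+\alpha p}$ and define $(f_i)_{i\ge1}$ by $$f_1=\frac{p}{1+\beta(1+\alpha)},\qquad f_i=\frac{\beta(i-1+\alpha)}{1+\beta(i+\alpha)}\,f_{i-1}\quad(i>1).$$ Then for every $i\ge1$, $$\lim_{k\to\infty}\frac{E(F_i(k))}{k}=f_i.$$
   Context: Urn transfer model ($p_k$-model). There are countably many urns $urn_1,urn_2,\dots$; each ball in $urn_i$ carries $i$ pins. Let $F_i(k)$ be the number of balls in $urn_i$ after $k$ steps. Initially $F_1(1)=1$ and $F_i(1)=0$ for $i>1$. At stage $k+1$ ($k\ge1$): (i) with probability $$p_{k+1}=1-\frac{(1-p)\sum_{i=1}^k (i+\alpha)F_i(k)}{k(1+\alpha p)+\alpha(1-p)},$$ a new ball is added to $urn_1$; (ii) with probability $1-p_{k+1}$, $urn_i$ is chosen with probability $\frac{(1-p)(i+\alpha)F_i(k)}{k(1+\alpha p)+\alpha(1-p)}$ ($1\le i\le k$), and one ball from $urn_i$ is transferred to $urn_{i+1}$. The process is only defined when $0\le p_{k+1}\le1$ at each stage. $E$ denotes expectation over the randomness of the process. *)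

theory Defs
  imports "HOL-Probability.Probability"
begin

text \<open>Configurations: F i = number of balls in urn i (urn indices start at 1).\<close>
type_synonym urn_config = "nat \<Rightarrow> nat"

definition urn_init :: urn_config where
  "urn_init = (\<lambda>i. if i = 1 then 1 else 0)"

definition urn_den :: "real \<Rightarrow> real \<Rightarrow> nat \<Rightarrow> real" where
  "urn_den p \<alpha> k = real k * (1 + \<alpha> * p) + \<alpha> * (1 - p)"

text \<open>p_{k+1} as a function of the configuration F = F(k).\<close>
definition urn_pk :: "real \<Rightarrow> real \<Rightarrow> nat \<Rightarrow> urn_config \<Rightarrow> real" where
  "urn_pk p \<alpha> k F =
     1 - (1 - p) * (\<Sum>i=1..k. (real i + \<alpha>) * real (F i)) / urn_den p \<alpha> k"

text \<open>Probability that urn i is chosen for a transfer at stage k+1.\<close>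
definition urn_w :: "real \<Rightarrow> real \<Rightarrow> nat \<Rightarrow> urn_config \<Rightarrow> nat \<Rightarrow> real" where
  "urn_w p \<alpha> k F i = (1 - p) * (real i + \<alpha>) * real (F i) / urn_den p \<alpha> k"

text \<open>Actions: None = new ball into urn 1; Some i = move a ball from urn i to urn i+1.\<close>
definition urn_apply :: "urn_config \<Rightarrow> nat option \<Rightarrow> urn_config" where
  "urn_apply F a = (case a of
      None \<Rightarrow> F(1 := F 1 + 1)
    | Some i \<Rightarrow> F(i := F i - 1, Suc i := F (Suc i) + 1))"

text \<open>Transition from stage k to stage k+1 (meaningful when 0 <= p_{k+1} <= 1).\<close>
definition urn_step :: "real \<Rightarrow> real \<Rightarrow> nat \<Rightarrow> urn_config \<Rightarrow> urn_config pmf" where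
  "urn_step p \<alpha> k F = map_pmf (urn_apply F)
     (embed_pmf (\<lambda>a. case a of
         None \<Rightarrow> urn_pk p \<alpha> k F
       | Some i \<Rightarrow> (if 1 \<le> i \<and> i \<le> k then urn_w p \<alpha> k F i else 0)))"

text \<open>Distribution of the configuration F(k) after k steps (k >= 1; index 0 is a dummy).\<close>
fun urn_dist :: "real \<Rightarrow> real \<Rightarrow> nat \<Rightarrow> urn_config pmf" where
  "urn_dist p \<alpha> 0 = return_pmf urn_init"
| "urn_dist p \<alpha> (Suc k) =
     (if k = 0 then return_pmf urn_init else urn_dist p \<alpha> k \<bind> urn_step p \<alpha> k)"

fun urn_f :: "real \<Rightarrow> real \<Rightarrow> nat \<Rightarrow> real" where
  "urn_f p \<alpha> 0 = 0"
| "urn_f p \<alpha> (Suc 0) = p / (1 + ((1 - p) / (1 + \<alpha> * p)) * (1 + \<alpha>))"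
| "urn_f p \<alpha> (Suc (Suc j)) =
     (let \<beta> = (1 - p) / (1 + \<alpha> * p) in
       \<beta> * (real (Suc j) + \<alpha>) / (1 + \<beta> * (real (Suc (Suc j)) + \<alpha>)) * urn_f p \<alpha> (Suc j))"

end

theory Submission
  imports Defs
begin

text \<open>
  Every step adds exactly one pin, so after \<open>k\<close> steps there are \<open>k\<close> pins and
  \<open>\<Sum>(i + \<alpha>) F\<^sub>i = k + \<alpha> N\<^sub>k\<close>, where \<open>N\<^sub>k\<close> is the number of balls. Thus \<open>p\<^sub>k\<^sub>+\<^sub>1\<close> is
  affine in \<open>N\<^sub>k\<close>, and since \<open>N\<close> grows exactly when a new ball is added,
  \<open>E N\<^sub>k\<^sub>+\<^sub>1 = E N\<^sub>k + E p\<^sub>k\<^sub>+\<^sub>1\<close>; this recursion is solved by \<open>E N\<^sub>k = p k + 1 - p\<close>, which in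
  turn gives \<open>E p\<^sub>k\<^sub>+\<^sub>1 = p\<close> at every stage.

  Consequently \<open>e\<^sub>i(k) = E F\<^sub>i(k)\<close> satisfies a linear recursion
  \<open>e\<^sub>i(k+1) = e\<^sub>i(k) (1 - b\<^sub>i(k)/k) + y\<^sub>i(k)\<close> with \<open>b\<^sub>i(k) \<rightarrow> \<beta>(i + \<alpha>)\<close> and inflow
  \<open>y\<^sub>1 = p\<close>, \<open>y\<^sub>i(k) \<approx> \<beta>(i - 1 + \<alpha>) e\<^sub>i\<^sub>-\<^sub>1(k)/k\<close>. For such a recursion \<open>e(k)/k\<close> tends to
  \<open>lim y / (1 + lim b)\<close>, because the deviation \<open>e(k) - L k\<close> from the candidate limit grows
  sublinearly; induction on \<open>i\<close> yields the constants \<open>f\<^sub>i\<close>.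
\<close>

lemma div_real_tendsto_zero_if_increments_vanish:
  fixes u e :: "nat \<Rightarrow> real"
  assumes increments: "eventually (\<lambda>k. \<bar>u (Suc k)\<bar> \<le> \<bar>u k\<bar> + \<bar>e k\<bar>) sequentially"
    and e: "e \<longlonglongrightarrow> 0"
  shows "(\<lambda>k. u k / real k) \<longlonglongrightarrow> 0"
proof (rule tendstoI)
  fix r :: real assume r: "r > 0"
  have "eventually (\<lambda>k. \<bar>e k\<bar> < r/2) sequentially"
    using order_tendstoD(2)[OF tendsto_rabs[OF e], of "r/2"] r by simp
  with increments have "eventually (\<lambda>k. \<bar>u (Suc k)\<bar> \<le> \<bar>u k\<bar> + r/2) sequentially"
    by eventually_elim linarith
  then obtain K where K: "\<And>k. k \<ge> K \<Longrightarrow> \<bar>u (Suc k)\<bar> \<le> \<bar>u k\<bar> + r/2"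
    unfolding eventually_sequentially by blast
  have bound: "\<bar>u n\<bar> \<le> \<bar>u K\<bar> + real (n - K) * (r/2)" if "n \<ge> K" for n
    using that
  proof (induction n rule: dec_induct)
    case (step n)
    have "real (Suc n - K) * (r/2) = real (n - K) * (r/2) + r/2"
      using step(1) by (simp add: Suc_diff_le field_simps)
    then show ?case using K[OF step(1)] step.IH by linarith
  qed simp
  have "eventually (\<lambda>n. \<bar>u K\<bar> / real n < r/2) sequentially"
    using order_tendstoD(2)[OF lim_const_over_n[of "\<bar>u K\<bar>"], of "r/2"] r by simp
  then show "eventually (\<lambda>n. dist (u n / real n) 0 < r) sequentially"
    using eventually_ge_at_top[of "max K 1"]
  proof eventually_elim
    case (elim n)
    then have n: "real n > 0" "n \<ge> K" by auto
    have "real (n - K) * (r/2) \<le> real n * (r/2)"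
      using r by (intro mult_right_mono) auto
    then have "\<bar>u n\<bar> \<le> \<bar>u K\<bar> + real n * (r/2)"
      using bound[OF n(2)] by linarith
    then have "\<bar>u n\<bar> / real n \<le> \<bar>u K\<bar> / real n + r/2"
      using n by (simp add: field_simps)
    moreover have "dist (u n / real n) 0 = \<bar>u n\<bar> / real n"
      by simp
    ultimately show ?case using elim(1) by linarith
  qed
qed

lemma linear_recurrence_div_tendsto:
  fixes x b y :: "nat \<Rightarrow> real"
  assumes recurrence: "eventually (\<lambda>k. x (Suc k) = x k * (1 - b k / real k) + y k) sequentially"
    and b: "b \<longlonglongrightarrow> B" and B: "B > 0" and y: "y \<longlonglongrightarrow> Y"
  shows "(\<lambda>k. x k / real k) \<longlonglongrightarrow> Y / (1 + B)"
proof -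
  define L where "L = Y / (1 + B)"
  define u where "u k = x k - L * real k" for k
  define e where "e k = y k - L - L * b k" for k
  have "e \<longlonglongrightarrow> Y - L - L * B"
    unfolding e_def by (intro tendsto_intros y b)
  moreover have "Y - L - L * B = 0"
    using B by (simp add: L_def field_simps)
  ultimately have e: "e \<longlonglongrightarrow> 0" by simp
  have "eventually (\<lambda>k. 0 < b k) sequentially"
    using order_tendstoD(1)[OF b B] .
  moreover have "eventually (\<lambda>k. b k < B + 1) sequentially"
    using order_tendstoD(2)[OF b] by simp
  moreover have "eventually (\<lambda>k. B + 1 < real k) sequentially"
    using filterlim_real_sequentially by (simp add: filterlim_at_top_dense)
  ultimately
  have "eventually (\<lambda>k. \<bar>u (Suc k)\<bar> \<le> \<bar>u k\<bar> + \<bar>e k\<bar>) sequentially"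
    using recurrence
  proof eventually_elim
    case (elim k)
    then have k: "real k > 0" and "0 \<le> b k / real k" "b k / real k \<le> 1"
      by auto
    then have "\<bar>u k * (1 - b k / real k)\<bar> \<le> \<bar>u k\<bar>"
      by (simp add: abs_mult mult_left_le)
    moreover have "u (Suc k) = u k * (1 - b k / real k) + e k"
      using elim(4) k by (simp add: u_def e_def field_simps)
    ultimately show ?case by linarith
  qed
  from div_real_tendsto_zero_if_increments_vanish[OF this e]
  have "(\<lambda>k. u k / real k + L) \<longlonglongrightarrow> L"
    using tendsto_add[OF _ tendsto_const, of _ 0 _ L] by simp
  moreover have "eventually (\<lambda>k. u k / real k + L = x k / real k) sequentially"
    using eventually_gt_at_top[of 0] by eventually_elim (simp add: u_def diff_divide_distrib)
  ultimately show ?thesis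
    unfolding L_def by (rule Lim_transform_eventually)
qed

lemma pmf_embed_pmf_finite_support:
  fixes f :: "'a \<Rightarrow> real"
  assumes "finite A" and nonneg: "\<And>x. 0 \<le> f x" and outside: "\<And>x. x \<notin> A \<Longrightarrow> f x = 0"
    and total: "(\<Sum>x\<in>A. f x) = 1"
  shows "pmf (embed_pmf f) x = f x"
proof (rule pmf_embed_pmf)
  have "(\<integral>\<^sup>+x. ennreal (f x) \<partial>count_space UNIV) = (\<Sum>x\<in>A. ennreal (f x))"
    using assms(1) outside by (intro nn_integral_count_space') auto
  then show "(\<integral>\<^sup>+x. ennreal (f x) \<partial>count_space UNIV) = 1"
    using nonneg total by simp
qed (fact nonneg)

lemma expectation_map_embed_pmf_finite_support:
  fixes f :: "'a \<Rightarrow> real" and h :: "'b \<Rightarrow> real"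
  assumes "finite A" and "\<And>x. 0 \<le> f x" and outside: "\<And>x. x \<notin> A \<Longrightarrow> f x = 0"
    and "(\<Sum>x\<in>A. f x) = 1"
  shows "measure_pmf.expectation (map_pmf g (embed_pmf f)) h = (\<Sum>x\<in>A. f x * h (g x))"
  unfolding integral_map_pmf
  by (subst integral_measure_pmf[OF assms(1)])
    (use outside in \<open>auto simp: pmf_embed_pmf_finite_support[OF assms] set_pmf_eq\<close>)

lemma sum_mult_fun_upd:
  fixes c :: "'a \<Rightarrow> real" and F :: "'a \<Rightarrow> nat"
  assumes "finite S" "i \<in> S"
  shows "(\<Sum>j\<in>S. c j * real ((F(i := x)) j)) = (\<Sum>j\<in>S. c j * real (F j)) + c i * (real x - real (F i))"
proof -
  have "(\<Sum>j\<in>S - {i}. c j * real ((F(i := x)) j)) = (\<Sum>j\<in>S - {i}. c j * real (F j))"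
    by (intro sum.cong) auto
  then show ?thesis
    using assms by (simp add: sum.remove algebra_simps)
qed

definition urn_actions :: "nat \<Rightarrow> nat option set" where
  "urn_actions k = insert None (Some ` {1..k})"

definition urn_weight :: "real \<Rightarrow> real \<Rightarrow> nat \<Rightarrow> urn_config \<Rightarrow> nat option \<Rightarrow> real" where
  "urn_weight p \<alpha> k F = (\<lambda>a. case a of
       None \<Rightarrow> urn_pk p \<alpha> k F
     | Some i \<Rightarrow> (if 1 \<le> i \<and> i \<le> k then urn_w p \<alpha> k F i else 0))"

lemma urn_step_eq_map_embed: "urn_step p \<alpha> k F = map_pmf (urn_apply F) (embed_pmf (urn_weight p \<alpha> k F))"
  unfolding urn_step_def urn_weight_def ..

lemma urn_weight_outside_actions: "a \<notin> urn_actions k \<Longrightarrow> urn_weight p \<alpha> k F a = 0"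
  unfolding urn_actions_def urn_weight_def by (auto split: option.splits)

lemma sum_urn_weight_Some:
  "(\<Sum>a\<in>Some ` {1..k}. urn_weight p \<alpha> k F a * h a) = (\<Sum>i=1..k. urn_w p \<alpha> k F i * h (Some i))"
  by (simp add: sum.reindex urn_weight_def)

lemma sum_urn_weight_actions:
  "(\<Sum>a\<in>urn_actions k. urn_weight p \<alpha> k F a * h a)
     = urn_pk p \<alpha> k F * h None + (\<Sum>i=1..k. urn_w p \<alpha> k F i * h (Some i))"
proof -
  have "urn_weight p \<alpha> k F None = urn_pk p \<alpha> k F"
    by (simp add: urn_weight_def)
  then show ?thesis
    using sum_urn_weight_Some[of p \<alpha> k F h] by (simp add: urn_actions_def)
qed

lemma urn_pk_plus_sum_urn_w: "urn_pk p \<alpha> k F + (\<Sum>i=1..k. urn_w p \<alpha> k F i) = 1"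
  unfolding urn_pk_def urn_w_def by (simp add: sum_divide_distrib sum_distrib_left mult.assoc)

lemma sum_urn_weight: "(\<Sum>a\<in>urn_actions k. urn_weight p \<alpha> k F a) = 1"
  using sum_urn_weight_actions[of p \<alpha> k F "\<lambda>_. 1"] urn_pk_plus_sum_urn_w[of p \<alpha> k F] by simp

lemma urn_w_eq_0: "F i = 0 \<Longrightarrow> urn_w p \<alpha> k F i = 0"
  unfolding urn_w_def by simp

definition urn_invariant :: "nat \<Rightarrow> urn_config \<Rightarrow> bool" where
  "urn_invariant k F \<longleftrightarrow> (\<forall>j>k. F j = 0) \<and> (\<Sum>j=1..k. real j * real (F j)) = real k"

lemma urn_invariant_urn_apply:
  assumes inv: "urn_invariant k F" and a: "a \<in> urn_actions k" and weight: "urn_weight p \<alpha> k F a \<noteq> 0"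
  shows "urn_invariant (Suc k) (urn_apply F a)"
proof -
  have pins: "(\<Sum>j=1..Suc k. real j * real (F j)) = real k"
    using inv unfolding urn_invariant_def by simp
  show ?thesis
  proof (cases a)
    case None
    then show ?thesis
      using inv pins sum_mult_fun_upd[of "{1..Suc k}" 1 real F "F 1 + 1"]
      by (simp add: urn_apply_def urn_invariant_def)
  next
    case (Some i)
    with a weight have i: "1 \<le> i" "i \<le> k" and "urn_w p \<alpha> k F i \<noteq> 0"
      by (auto simp: urn_actions_def urn_weight_def)
    then have "F i \<noteq> 0" by (metis urn_w_eq_0)
    then have Fi: "real (F i - 1) = real (F i) - 1" by simp
    define F' where "F' = F(i := F i - 1)"
    have "urn_apply F a = F'(Suc i := F' (Suc i) + 1)"
      using Some by (simp add: urn_apply_def F'_def)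
    moreover have "(\<Sum>j=1..Suc k. real j * real (F' j)) = real k - real i"
      unfolding F'_def using sum_mult_fun_upd[of "{1..Suc k}" i real F "F i - 1"] i pins Fi by simp
    ultimately show ?thesis
      using inv i sum_mult_fun_upd[of "{1..Suc k}" "Suc i" real F' "F' (Suc i) + 1"]
      by (auto simp: urn_invariant_def F'_def)
  qed
qed

definition urn_balls :: "nat \<Rightarrow> urn_config \<Rightarrow> real" where
  "urn_balls k F = (\<Sum>j=1..k. real (F j))"

lemma urn_pk_eq_urn_balls:
  assumes "urn_invariant k F"
  shows "urn_pk p \<alpha> k F = 1 - (1 - p) * (real k + \<alpha> * urn_balls k F) / urn_den p \<alpha> k"
proof -
  have "(\<Sum>i=1..k. (real i + \<alpha>) * real (F i)) = (\<Sum>i=1..k. real i * real (F i)) + \<alpha> * urn_balls k F"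
    unfolding urn_balls_def by (simp add: distrib_right sum.distrib sum_distrib_left)
  then show ?thesis
    using assms unfolding urn_pk_def urn_invariant_def by simp
qed

lemma urn_w_mult_urn_apply_Some:
  "urn_w p \<alpha> k F j * real (urn_apply F (Some j) i)
     = urn_w p \<alpha> k F j * real (F i) - (if i = j then urn_w p \<alpha> k F j else 0)
       + (if i = Suc j then urn_w p \<alpha> k F j else 0)"
proof (cases "F j = 0")
  case True
  then show ?thesis by (simp add: urn_w_eq_0)
next
  case False
  then show ?thesis by (auto simp: urn_apply_def algebra_simps)
qed

lemma urn_step_count_drift:
  assumes inv: "urn_invariant k F" and i: "i \<ge> 1"
  shows "(\<Sum>a\<in>urn_actions k. urn_weight p \<alpha> k F a * real (urn_apply F a i))
     = real (F i) + (if i = 1 then urn_pk p \<alpha> k F else urn_w p \<alpha> k F (i - 1)) - urn_w p \<alpha> k F i"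
proof -
  let ?w = "urn_w p \<alpha> k F"
  have beyond: "?w j = 0" if "j > k" for j
    using inv that by (simp add: urn_invariant_def urn_w_eq_0)
  have "(\<Sum>j=1..k. ?w j * real (urn_apply F (Some j) i))
      = (\<Sum>j=1..k. ?w j) * real (F i) - (\<Sum>j=1..k. if i = j then ?w j else 0)
        + (\<Sum>j=1..k. if i = Suc j then ?w j else 0)"
    by (simp add: urn_w_mult_urn_apply_Some sum.distrib sum_subtractf sum_distrib_right)
  also have "(\<Sum>j=1..k. if i = j then ?w j else 0) = ?w i"
    using i beyond[of i] by auto
  also have "(\<Sum>j=1..k. if i = Suc j then ?w j else 0) = (\<Sum>j=1..k. if j = i - 1 then ?w j else 0)"
    using i by (intro sum.cong) auto
  also have "\<dots> = (if i = 1 then 0 else ?w (i - 1))"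
    using i beyond[of "i - 1"] by auto
  finally have transfers: "(\<Sum>j=1..k. ?w j * real (urn_apply F (Some j) i))
      = (\<Sum>j=1..k. ?w j) * real (F i) - ?w i + (if i = 1 then 0 else ?w (i - 1))" .
  have "real (F i) * urn_pk p \<alpha> k F + real (F i) * (\<Sum>j=1..k. ?w j) = real (F i)"
    using urn_pk_plus_sum_urn_w[of p \<alpha> k F] by (metis distrib_left mult.right_neutral)
  moreover have "real (urn_apply F None i) = real (F i) + (if i = 1 then 1 else 0)"
    by (simp add: urn_apply_def)
  ultimately show ?thesis
    unfolding sum_urn_weight_actions transfers by (cases "i = 1") (simp_all add: algebra_simps)
qed

lemma urn_step_balls_drift:
  assumes inv: "urn_invariant k F"
  shows "(\<Sum>a\<in>urn_actions k. urn_weight p \<alpha> k F a * urn_balls (Suc k) (urn_apply F a))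
     = urn_balls k F + urn_pk p \<alpha> k F"
proof -
  let ?w = "urn_w p \<alpha> k F" and ?pk = "urn_pk p \<alpha> k F"
  have empty: "F (Suc k) = 0"
    using inv by (simp add: urn_invariant_def)
  have shift: "(\<Sum>i=1..Suc n. if i = 1 then c else g (i - 1)) = c + (\<Sum>i=1..n. g i)"
    for n and c :: real and g
    by (induction n) auto
  have "(\<Sum>a\<in>urn_actions k. urn_weight p \<alpha> k F a * urn_balls (Suc k) (urn_apply F a))
      = (\<Sum>i=1..Suc k. \<Sum>a\<in>urn_actions k. urn_weight p \<alpha> k F a * real (urn_apply F a i))"
    unfolding urn_balls_def sum_distrib_left by (rule sum.swap)
  also have "\<dots> = (\<Sum>i=1..Suc k. real (F i) + (if i = 1 then ?pk else ?w (i - 1)) - ?w i)"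
    using inv by (intro sum.cong refl urn_step_count_drift) auto
  also have "\<dots> = (\<Sum>i=1..Suc k. real (F i)) + (\<Sum>i=1..Suc k. if i = 1 then ?pk else ?w (i - 1))
      - (\<Sum>i=1..Suc k. ?w i)"
    by (simp only: sum.distrib sum_subtractf)
  also have "\<dots> = urn_balls k F + ?pk"
    unfolding shift using empty urn_w_eq_0[of F "Suc k" p \<alpha> k] by (simp add: urn_balls_def)
  finally show ?thesis .
qed

locale urn_params =
  fixes p \<alpha> :: real
  assumes p_nonneg: "0 \<le> p" and p_less_1: "p < 1" and alpha_gt: "\<alpha> > -1"
begin

lemma one_plus_alpha_p_pos: "1 + \<alpha> * p > 0"
proof -
  have "1 + \<alpha> * p = (1 - p) + p * (1 + \<alpha>)" by (simp add: algebra_simps)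
  moreover have "p * (1 + \<alpha>) \<ge> 0" using p_nonneg alpha_gt by simp
  ultimately show ?thesis using p_less_1 by linarith
qed

lemma urn_den_pos:
  assumes "k \<ge> 1" shows "urn_den p \<alpha> k > 0"
proof -
  have "urn_den p \<alpha> k = real (k - 1) * (1 + \<alpha> * p) + (1 + \<alpha>)"
    using assms by (simp add: urn_den_def algebra_simps)
  then show ?thesis
    using one_plus_alpha_p_pos alpha_gt by (simp add: add_nonneg_pos)
qed

lemma urn_weight_nonneg:
  assumes "k \<ge> 1" "0 \<le> urn_pk p \<alpha> k F"
  shows "0 \<le> urn_weight p \<alpha> k F a"
  using assms urn_den_pos[OF assms(1)] p_less_1 alpha_gt
  by (auto simp: urn_weight_def urn_w_def split: option.splits)

lemma
  assumes "k \<ge> 1" "0 \<le> urn_pk p \<alpha> k F"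
  shows set_pmf_urn_step:
      "set_pmf (urn_step p \<alpha> k F) \<subseteq> urn_apply F ` {a \<in> urn_actions k. urn_weight p \<alpha> k F a \<noteq> 0}"
    and expectation_urn_step:
      "measure_pmf.expectation (urn_step p \<alpha> k F) h
         = (\<Sum>a\<in>urn_actions k. urn_weight p \<alpha> k F a * h (urn_apply F a))"
proof -
  have finite: "finite (urn_actions k)"
    by (simp add: urn_actions_def)
  note embed = finite urn_weight_nonneg[OF assms] urn_weight_outside_actions sum_urn_weight
  show "set_pmf (urn_step p \<alpha> k F) \<subseteq> urn_apply F ` {a \<in> urn_actions k. urn_weight p \<alpha> k F a \<noteq> 0}"
    unfolding urn_step_eq_map_embed set_map_pmf
    by (auto simp: set_pmf_eq pmf_embed_pmf_finite_support[OF embed] intro!: imageI)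
      (metis urn_weight_outside_actions)
  show "measure_pmf.expectation (urn_step p \<alpha> k F) h
      = (\<Sum>a\<in>urn_actions k. urn_weight p \<alpha> k F a * h (urn_apply F a))"
    unfolding urn_step_eq_map_embed by (rule expectation_map_embed_pmf_finite_support[OF embed])
qed

lemma real_div_urn_den_tendsto: "(\<lambda>k. real k / urn_den p \<alpha> k) \<longlonglongrightarrow> 1 / (1 + \<alpha> * p)"
proof -
  have "(\<lambda>k. 1 / ((1 + \<alpha> * p) + \<alpha> * (1 - p) / real k)) \<longlonglongrightarrow> 1 / ((1 + \<alpha> * p) + 0)"
    using one_plus_alpha_p_pos by (intro tendsto_intros) auto
  moreover have "eventually (\<lambda>k. 1 / ((1 + \<alpha> * p) + \<alpha> * (1 - p) / real k) = real k / urn_den p \<alpha> k)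
      sequentially"
    using eventually_gt_at_top[of 0] by eventually_elim (simp add: urn_den_def field_simps)
  ultimately show ?thesis
    by (auto intro: Lim_transform_eventually)
qed

end

text \<open>Only the lower bound of the well-definedness hypothesis is needed: the step weights are
  nonnegative and sum to 1, so \<open>p\<^sub>k\<^sub>+\<^sub>1 \<le> 1\<close> holds automatically.\<close>

locale urn_model = urn_params +
  assumes urn_pk_nonneg: "\<And>k F. k \<ge> 1 \<Longrightarrow> F \<in> set_pmf (urn_dist p \<alpha> k) \<Longrightarrow> 0 \<le> urn_pk p \<alpha> k F"
begin

abbreviation expect :: "nat \<Rightarrow> (urn_config \<Rightarrow> real) \<Rightarrow> real" where
  "expect k h \<equiv> measure_pmf.expectation (urn_dist p \<alpha> k) h"

lemma finite_set_pmf_urn_step: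
  assumes "k \<ge> 1" "F \<in> set_pmf (urn_dist p \<alpha> k)"
  shows "finite (set_pmf (urn_step p \<alpha> k F))"
  by (rule finite_subset[OF set_pmf_urn_step[OF assms(1) urn_pk_nonneg[OF assms]]])
    (simp add: urn_actions_def)

lemma urn_dist_finite_invariant:
  assumes "k \<ge> 1"
  shows "finite (set_pmf (urn_dist p \<alpha> k)) \<and> (\<forall>F\<in>set_pmf (urn_dist p \<alpha> k). urn_invariant k F)"
  using assms
proof (induction k rule: dec_induct)
  case base
  show ?case by (simp add: urn_invariant_def urn_init_def)
next
  case (step k)
  have support: "set_pmf (urn_dist p \<alpha> (Suc k))
      = (\<Union>F\<in>set_pmf (urn_dist p \<alpha> k). set_pmf (urn_step p \<alpha> k F))"
    using step(1) by simp
  have "urn_invariant (Suc k) G"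
    if "F \<in> set_pmf (urn_dist p \<alpha> k)" "G \<in> set_pmf (urn_step p \<alpha> k F)" for F G
    using set_pmf_urn_step[OF step(1) urn_pk_nonneg[OF step(1) that(1)]] that step(3)
    by (blast intro: urn_invariant_urn_apply)
  then show ?case
    unfolding support using step(3) finite_set_pmf_urn_step[OF step(1)] by blast
qed

lemma urn_invariant_urn_dist: "k \<ge> 1 \<Longrightarrow> F \<in> set_pmf (urn_dist p \<alpha> k) \<Longrightarrow> urn_invariant k F"
  using urn_dist_finite_invariant by blast

lemma integrable_urn_dist:
  "k \<ge> 1 \<Longrightarrow> integrable (measure_pmf (urn_dist p \<alpha> k)) (h :: urn_config \<Rightarrow> real)"
  using urn_dist_finite_invariant by (blast intro: integrable_measure_pmf_finite)

lemma expectation_urn_dist_cong: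
  "(\<And>F. F \<in> set_pmf (urn_dist p \<alpha> k) \<Longrightarrow> g F = h F) \<Longrightarrow> expect k g = expect k h"
  by (intro integral_cong_AE AE_pmfI) auto

lemma expectation_urn_dist_Suc:
  assumes k: "k \<ge> 1"
  shows "expect (Suc k) h = expect k (\<lambda>F. \<Sum>a\<in>urn_actions k. urn_weight p \<alpha> k F a * h (urn_apply F a))"
proof -
  let ?S = "set_pmf (urn_dist p \<alpha> k)"
  have "finite ?S"
    using urn_dist_finite_invariant[OF k] ..
  have "expect (Suc k) h
      = (\<Sum>F\<in>?S. pmf (urn_dist p \<alpha> k) F *\<^sub>R measure_pmf.expectation (urn_step p \<alpha> k F) h)"
    using k \<open>finite ?S\<close> finite_set_pmf_urn_step[OF k] by (simp add: pmf_expectation_bind)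
  also have "\<dots> = (\<Sum>F\<in>?S. pmf (urn_dist p \<alpha> k) F *\<^sub>R
      (\<Sum>a\<in>urn_actions k. urn_weight p \<alpha> k F a * h (urn_apply F a)))"
    using expectation_urn_step[OF k urn_pk_nonneg[OF k]] by simp
  also have "\<dots> = expect k (\<lambda>F. \<Sum>a\<in>urn_actions k. urn_weight p \<alpha> k F a * h (urn_apply F a))"
    by (rule integral_measure_pmf[OF \<open>finite ?S\<close>, symmetric]) auto
  finally show ?thesis .
qed

lemma expected_urn_pk_eq:
  assumes k: "k \<ge> 1"
  shows "expect k (urn_pk p \<alpha> k)
    = 1 - (1 - p) * (real k + \<alpha> * expect k (urn_balls k)) / urn_den p \<alpha> k"
proof -
  have "expect k (urn_pk p \<alpha> k)
      = expect k (\<lambda>F. 1 - (1 - p) * (real k + \<alpha> * urn_balls k F) / urn_den p \<alpha> k)"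
    by (intro expectation_urn_dist_cong urn_pk_eq_urn_balls urn_invariant_urn_dist[OF k])
  then show ?thesis
    by (simp add: integrable_urn_dist[OF k] add_divide_distrib)
qed

lemma expected_urn_pk_if_balls:
  assumes "k \<ge> 1" "expect k (urn_balls k) = p * real k + 1 - p"
  shows "expect k (urn_pk p \<alpha> k) = p"
proof -
  have "real k + \<alpha> * expect k (urn_balls k) = urn_den p \<alpha> k"
    unfolding assms(2) urn_den_def by (simp add: algebra_simps)
  then show ?thesis
    using urn_den_pos[OF assms(1)] by (simp add: expected_urn_pk_eq[OF assms(1)])
qed

lemma expected_urn_balls: "k \<ge> 1 \<Longrightarrow> expect k (urn_balls k) = p * real k + 1 - p"
proof (induction k rule: dec_induct)
  case base
  show ?case by (simp add: urn_balls_def urn_init_def)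
next
  case (step k)
  have "expect (Suc k) (urn_balls (Suc k)) = expect k (\<lambda>F. urn_balls k F + urn_pk p \<alpha> k F)"
    unfolding expectation_urn_dist_Suc[OF step(1)]
    by (intro expectation_urn_dist_cong urn_step_balls_drift urn_invariant_urn_dist[OF step(1)])
  also have "\<dots> = expect k (urn_balls k) + expect k (urn_pk p \<alpha> k)"
    by (simp add: integrable_urn_dist[OF step(1)])
  finally show ?case
    using step(3) expected_urn_pk_if_balls[OF step(1,3)] by (simp add: algebra_simps)
qed

lemma expected_urn_pk: "k \<ge> 1 \<Longrightarrow> expect k (urn_pk p \<alpha> k) = p"
  using expected_urn_pk_if_balls expected_urn_balls by blast

lemma expected_count_Suc:
  assumes k: "k \<ge> 1" and i: "i \<ge> 1"
  shows "expect (Suc k) (\<lambda>F. real (F i))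
    = expect k (\<lambda>F. real (F i)) * (1 - (1 - p) * (real i + \<alpha>) / urn_den p \<alpha> k)
      + (if i = 1 then p else (1 - p) * (real (i - 1) + \<alpha>) / urn_den p \<alpha> k * expect k (\<lambda>F. real (F (i - 1))))"
proof -
  have "expect (Suc k) (\<lambda>F. real (F i)) = expect k (\<lambda>F. real (F i)
      + (if i = 1 then urn_pk p \<alpha> k F else urn_w p \<alpha> k F (i - 1)) - urn_w p \<alpha> k F i)"
    unfolding expectation_urn_dist_Suc[OF k]
    by (intro expectation_urn_dist_cong urn_step_count_drift urn_invariant_urn_dist[OF k] i)
  then show ?thesis
    by (cases "i = 1")
      (simp_all add: urn_w_def integrable_urn_dist[OF k] expected_urn_pk[OF k] algebra_simps)
qed

lemma expected_count_div_tendsto: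
  assumes "i \<ge> 1"
    and inflow: "(\<lambda>k. if i = 1 then p
                   else (1 - p) * (real (i - 1) + \<alpha>) / urn_den p \<alpha> k * expect k (\<lambda>F. real (F (i - 1))))
                 \<longlonglongrightarrow> Y"
  shows "(\<lambda>k. expect k (\<lambda>F. real (F i)) / real k) \<longlonglongrightarrow> Y / (1 + (1 - p) / (1 + \<alpha> * p) * (real i + \<alpha>))"
proof -
  let ?c = "(1 - p) * (real i + \<alpha>)"
  have rate: "(\<lambda>k. ?c * (real k / urn_den p \<alpha> k)) \<longlonglongrightarrow> ?c * (1 / (1 + \<alpha> * p))"
    by (intro tendsto_intros real_div_urn_den_tendsto)
  have rate_pos: "?c * (1 / (1 + \<alpha> * p)) > 0"
    using assms(1) p_less_1 alpha_gt one_plus_alpha_p_pos by simp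
  have recurrence: "eventually (\<lambda>k. expect (Suc k) (\<lambda>F. real (F i))
      = expect k (\<lambda>F. real (F i)) * (1 - ?c * (real k / urn_den p \<alpha> k) / real k)
        + (if i = 1 then p else (1 - p) * (real (i - 1) + \<alpha>) / urn_den p \<alpha> k * expect k (\<lambda>F. real (F (i - 1)))))
      sequentially"
    using eventually_ge_at_top[of 1]
  proof eventually_elim
    case (elim k)
    then have "?c * (real k / urn_den p \<alpha> k) / real k = ?c / urn_den p \<alpha> k"
      by simp
    then show ?case
      by (simp only: expected_count_Suc[OF elim assms(1)])
  qed
  from linear_recurrence_div_tendsto[OF recurrence rate rate_pos inflow]
  show ?thesis
    by (simp add: mult.commute)
qed

lemma expected_count_div_tendsto_urn_f:
  "(\<lambda>k. expect k (\<lambda>F. real (F (Suc j))) / real k) \<longlonglongrightarrow> urn_f p \<alpha> (Suc j)"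
proof (induction j)
  case 0
  show ?case
    using expected_count_div_tendsto[of 1 p] by simp
next
  case (Suc j)
  let ?c = "(1 - p) * (real (Suc j) + \<alpha>)"
  have "(\<lambda>k. ?c * (real k / urn_den p \<alpha> k) * (expect k (\<lambda>F. real (F (Suc j))) / real k))
      \<longlonglongrightarrow> ?c * (1 / (1 + \<alpha> * p)) * urn_f p \<alpha> (Suc j)"
    by (intro tendsto_intros real_div_urn_den_tendsto Suc.IH)
  moreover have "eventually (\<lambda>k. ?c * (real k / urn_den p \<alpha> k) * (expect k (\<lambda>F. real (F (Suc j))) / real k)
      = ?c / urn_den p \<alpha> k * expect k (\<lambda>F. real (F (Suc j)))) sequentially"
    using eventually_gt_at_top[of 0] by eventually_elim simp
  ultimately have "(\<lambda>k. ?c / urn_den p \<alpha> k * expect k (\<lambda>F. real (F (Suc j))))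
      \<longlonglongrightarrow> ?c * (1 / (1 + \<alpha> * p)) * urn_f p \<alpha> (Suc j)"
    by (rule Lim_transform_eventually)
  then have "(\<lambda>k. if Suc (Suc j) = 1 then p
      else (1 - p) * (real (Suc (Suc j) - 1) + \<alpha>) / urn_den p \<alpha> k * expect k (\<lambda>F. real (F (Suc (Suc j) - 1))))
      \<longlonglongrightarrow> ?c * (1 / (1 + \<alpha> * p)) * urn_f p \<alpha> (Suc j)"
    by simp
  from expected_count_div_tendsto[OF _ this]
  show ?case
    by (simp add: Let_def)
qed

end

theorem theoremA4:
  fixes p \<alpha> :: real
  assumes "0 < p" "p < 1" "\<alpha> > -1"
    and well_defined: "\<And>k F. k \<ge> 1 \<Longrightarrow> F \<in> set_pmf (urn_dist p \<alpha> k) \<Longrightarrow>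
                 0 \<le> urn_pk p \<alpha> k F \<and> urn_pk p \<alpha> k F \<le> 1"
  shows "\<forall>i\<ge>1. (\<lambda>k. measure_pmf.expectation (urn_dist p \<alpha> k) (\<lambda>F. real (F i)) / real k)
                \<longlonglongrightarrow> urn_f p \<alpha> i"
proof (intro allI impI)
  interpret urn_model p \<alpha>
    using assms by unfold_locales auto
  fix i :: nat
  assume "i \<ge> 1"
  then obtain j where "i = Suc j"
    by (cases i) auto
  then show "(\<lambda>k. expect k (\<lambda>F. real (F i)) / real k) \<longlonglongrightarrow> urn_f p \<alpha> i"
    using expected_count_div_tendsto_urn_f[of j] by (simp only:)
qed

end
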